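(* Let $T=(\vec G,G,\prec,A)$ be a strictly simplicial twisted graph with edge set $E$. Then for every $\boldsymbol\theta\in\mathbb{R}^E$ respecting $\prec$ there is a set $B\subset\mathcal C(\prec)$ such that the system of strict linear inequalities $\widehat c\cdot\mathbf r>0$, $c\in A\cup B$, in the unknown $\mathbf r\in\mathbb{R}^E$, is a minimal insoluble system.
   Context: Signed sets on a finite set $E$: pairs $X=(X^+,X^-)$ of disjoint subsets, $X(e)=+1,-1,0$ according as $e\in X^+$, $e\in X^-$, or neither; support $\underline X=X^+\cup X^-$. Conformal: no $e$ with $X(e)=-Y(e)\ne0$; composition $(X\circ Y)(e)=X(e)$ if $X(e)\ne0$, else $Y(e)$. For a total order $<$ on $E$, $\mathcal C(<)=\{(\{e_1,e_3\},\{e_2\}),(\{e_2\},\{e_1,e_3\}):e_1<e_2<e_3\}$ (circuits of the rank 2 oriented matroid $\mathcal M(<)$; vectors are compositions of pairwise conformal families of circuits); for a partial order $\prec$, $\mathcal C(\prec)=\bigcap_{<\supseteq\prec}\mathcal C(<)$. For a directed graph $\vec G=(V,\vec E)$ (no loops, parallel or antiparallel edges), underlying simple graph $G=(V,E)$, a strong map $\mathcal M^*(\vec G)\to\mathcal M(<)$ means every signed minimal cut $(\{(u,w):u\in S,w\notin S\},\{(u,w):w\in S,u\notin S\})$ ($S$, $V\setminus S$ inducing connected subgraphs) is a vector of $\mathcal M(<)$; $C^*_v=(\{(u,v)\in\vec E\},\{(v,u)\in\vec E\})$. A twisted graph $T=(\vec G,G,\prec,A)$: $\prec$ a partial order on $E$,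 $G$ three-edge-connected, $A\subset\mathcal C(\prec)$, a strong map $\mathcal M^*(\vec G)\to\mathcal M(<)$ for every total $<\supseteq\prec$, and a partition $A=\bigsqcup_{v}A_v$ with members of $A_v$ pairwise conformal and composing to $C^*_v$. $\boldsymbol\theta\in\mathbb{R}^E$ respects $\prec$ if $0<\theta_e<180$ (degrees) and $\theta_e<\theta_f$ whenever $e\prec f$. For $c\in\mathcal C(\prec)$, $\widehat c\in\mathbb{R}^E$ has $\widehat c(e)=0$ for $e\notin\underline c$ and $\widehat c(e)=c(e)\sin(\theta_{e''}-\theta_{e'})$ if $\underline c=\{e,e',e''\}$ with $e'\prec e''$; $\Sigma(T)$ is the matrix with rows $\widehat a$, $a\in A$. A matrix with $r+1$ rows and $r$ columns is a simplex if its rows have a linear dependency with all coefficients positive and every row dependency is a multiple of it. $T$ is simplicial on $F$ if for every $\boldsymbol\theta$ respecting $\prec$ the submatrix of $\Sigma(T)$ on columns $F$ is a simplex; $T$ is strictly simplicial if it is simplicial on some $F$ with $E\setminus F$ totally ordered by $\prec$. A system $M\mathbf r>0$ is minimal insoluble if it has no solution but every system obtained by deleting at least one inequality has a solution. *)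

theory Defs
  imports "HOL-Analysis.Analysis"
begin

text \<open>A signed set is a pair (X+, X-) of disjoint subsets.\<close>
type_synonym 'a sset = "'a set \<times> 'a set"

definition ssign :: "'a sset \<Rightarrow> 'a \<Rightarrow> real" where
  "ssign X e = (if e \<in> fst X then 1 else if e \<in> snd X then -1 else 0)"

definition ssupp :: "'a sset \<Rightarrow> 'a set" where
  "ssupp X = fst X \<union> snd X"

definition conformal :: "'a sset \<Rightarrow> 'a sset \<Rightarrow> bool" where
  "conformal X Y \<longleftrightarrow> fst X \<inter> snd Y = {} \<and> snd X \<inter> fst Y = {}"

text \<open>Composition: (X o Y)(e) = X(e) if X(e) \<noteq> 0, else Y(e).\<close>
definition scomp :: "'a sset \<Rightarrow> 'a sset \<Rightarrow> 'a sset" where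
  "scomp X Y = (fst X \<union> (fst Y - snd X), snd X \<union> (snd Y - fst X))"

definition scomp_list :: "'a sset list \<Rightarrow> 'a sset" where
  "scomp_list xs = foldr scomp xs ({}, {})"

definition strict_po_on :: "'a set \<Rightarrow> 'a rel \<Rightarrow> bool" where
  "strict_po_on E P \<longleftrightarrow> P \<subseteq> E \<times> E \<and> irrefl P \<and> trans P"

definition strict_total_on :: "'a set \<Rightarrow> 'a rel \<Rightarrow> bool" where
  "strict_total_on E L \<longleftrightarrow> strict_po_on E L \<and> total_on E L"

definition circuits_tot :: "'a rel \<Rightarrow> 'a sset set" where
  "circuits_tot L = {({e1, e3}, {e2}) | e1 e2 e3. (e1, e2) \<in> L \<and> (e2, e3) \<in> L}
                  \<union> {({e2}, {e1, e3}) | e1 e2 e3. (e1, e2) \<in> L \<and> (e2, e3) \<in> L}"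

definition is_vector :: "'a rel \<Rightarrow> 'a sset \<Rightarrow> bool" where
  "is_vector L X \<longleftrightarrow> (\<exists>xs. set xs \<subseteq> circuits_tot L \<and>
       (\<forall>Y\<in>set xs. \<forall>Z\<in>set xs. conformal Y Z) \<and> X = scomp_list xs)"

definition circuits_po :: "'a set \<Rightarrow> 'a rel \<Rightarrow> 'a sset set" where
  "circuits_po E P = (\<Inter> {circuits_tot L | L. strict_total_on E L \<and> P \<subseteq> L})"

text \<open>A directed graph on vertex set V with arc set Ed; arcs are also the edges of the
  underlying simple graph G (no loops, no antiparallel arcs; parallel arcs are impossible
  in the set representation).\<close>
definition digraph :: "'v set \<Rightarrow> ('v \<times> 'v) set \<Rightarrow> bool" where
  "digraph V Ed \<longleftrightarrow> finite V \<and> Ed \<subseteq> V \<times> V \<and> (\<forall>u. (u, u) \<notin> Ed) \<and>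
     (\<forall>u w. (u, w) \<in> Ed \<longrightarrow> (w, u) \<notin> Ed)"

definition connected_graph :: "'v set \<Rightarrow> ('v \<times> 'v) set \<Rightarrow> bool" where
  "connected_graph V F \<longleftrightarrow> V \<noteq> {} \<and>
     (\<forall>u\<in>V. \<forall>w\<in>V. (u, w) \<in> ({(x, y). (x, y) \<in> F \<or> (y, x) \<in> F} \<inter> (V \<times> V))\<^sup>*)"

definition three_edge_connected :: "'v set \<Rightarrow> ('v \<times> 'v) set \<Rightarrow> bool" where
  "three_edge_connected V Ed \<longleftrightarrow> card V \<ge> 2 \<and>
     (\<forall>F. F \<subseteq> Ed \<and> card F < 3 \<longrightarrow> connected_graph V (Ed - F))"

definition signed_cut :: "('v \<times> 'v) set \<Rightarrow> 'v set \<Rightarrow> ('v \<times> 'v) sset" where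
  "signed_cut Ed S = ({(u, w) \<in> Ed. u \<in> S \<and> w \<notin> S}, {(u, w) \<in> Ed. w \<in> S \<and> u \<notin> S})"

definition signed_min_cuts :: "'v set \<Rightarrow> ('v \<times> 'v) set \<Rightarrow> ('v \<times> 'v) sset set" where
  "signed_min_cuts V Ed = {signed_cut Ed S | S. S \<subseteq> V \<and>
      connected_graph S (Ed \<inter> (S \<times> S)) \<and> connected_graph (V - S) (Ed \<inter> ((V - S) \<times> (V - S)))}"

definition strong_map :: "'v set \<Rightarrow> ('v \<times> 'v) set \<Rightarrow> ('v \<times> 'v) rel \<Rightarrow> bool" where
  "strong_map V Ed L \<longleftrightarrow> (\<forall>X \<in> signed_min_cuts V Ed. is_vector L X)"

definition vertex_cocircuit :: "('v \<times> 'v) set \<Rightarrow> 'v \<Rightarrow> ('v \<times> 'v) sset" where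
  "vertex_cocircuit Ed v = ({(u, w) \<in> Ed. w = v}, {(u, w) \<in> Ed. u = v})"

definition twisted_graph ::
  "'v set \<Rightarrow> ('v \<times> 'v) set \<Rightarrow> ('v \<times> 'v) rel \<Rightarrow> ('v \<times> 'v) sset set \<Rightarrow> bool" where
  "twisted_graph V Ed P A \<longleftrightarrow>
     digraph V Ed \<and> strict_po_on Ed P \<and> three_edge_connected V Ed \<and>
     A \<subseteq> circuits_po Ed P \<and>
     (\<forall>L. strict_total_on Ed L \<and> P \<subseteq> L \<longrightarrow> strong_map V Ed L) \<and>
     (\<exists>Av :: 'v \<Rightarrow> ('v \<times> 'v) sset set.
        A = (\<Union>v\<in>V. Av v) \<and>
        (\<forall>v\<in>V. \<forall>w\<in>V. v \<noteq> w \<longrightarrow> Av v \<inter> Av w = {}) \<and>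
        (\<forall>v\<in>V. (\<forall>X\<in>Av v. \<forall>Y\<in>Av v. conformal X Y) \<and>
                 (\<exists>xs. distinct xs \<and> set xs = Av v \<and> scomp_list xs = vertex_cocircuit Ed v)))"

text \<open>\<theta> theta_respects \<prec> (angles in degrees).\<close>
definition theta_respects :: "'a set \<Rightarrow> 'a rel \<Rightarrow> ('a \<Rightarrow> real) \<Rightarrow> bool" where
  "theta_respects E P \<theta> \<longleftrightarrow> (\<forall>e\<in>E. 0 < \<theta> e \<and> \<theta> e < 180) \<and> (\<forall>(e, f)\<in>P. \<theta> e < \<theta> f)"

definition sin_deg :: "real \<Rightarrow> real" where
  "sin_deg x = sin (x * pi / 180)"

definition chat :: "'a rel \<Rightarrow> ('a \<Rightarrow> real) \<Rightarrow> 'a sset \<Rightarrow> 'a \<Rightarrow> real" where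
  "chat P \<theta> c e = (if e \<in> ssupp c then
      ssign c e * (THE s. \<exists>e' e''. ssupp c = {e, e', e''} \<and> (e', e'') \<in> P \<and>
                                     s = sin_deg (\<theta> e'' - \<theta> e'))
    else 0)"

definition simplex_matrix :: "'r set \<Rightarrow> 'a set \<Rightarrow> ('r \<Rightarrow> 'a \<Rightarrow> real) \<Rightarrow> bool" where
  "simplex_matrix R F M \<longleftrightarrow> finite R \<and> finite F \<and> card R = card F + 1 \<and>
     (\<exists>coef. (\<forall>a\<in>R. coef a > 0) \<and> (\<forall>f\<in>F. (\<Sum>a\<in>R. coef a * M a f) = 0) \<and>
          (\<forall>\<mu>. (\<forall>f\<in>F. (\<Sum>a\<in>R. \<mu> a * M a f) = 0) \<longrightarrow> (\<exists>t. \<forall>a\<in>R. \<mu> a = t * coef a)))"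

definition simplicial_on ::
  "'a set \<Rightarrow> 'a rel \<Rightarrow> 'a sset set \<Rightarrow> 'a set \<Rightarrow> bool" where
  "simplicial_on E P A F \<longleftrightarrow>
     (\<forall>\<theta>. theta_respects E P \<theta> \<longrightarrow> simplex_matrix A F (\<lambda>a e. chat P \<theta> a e))"

definition strictly_simplicial ::
  "'v set \<Rightarrow> ('v \<times> 'v) set \<Rightarrow> ('v \<times> 'v) rel \<Rightarrow> ('v \<times> 'v) sset set \<Rightarrow> bool" where
  "strictly_simplicial V Ed P A \<longleftrightarrow> twisted_graph V Ed P A \<and>
     (\<exists>F. F \<subseteq> Ed \<and> simplicial_on Ed P A F \<and> total_on (Ed - F) P)"

definition minimal_insoluble :: "'a set \<Rightarrow> 'i set \<Rightarrow> ('i \<Rightarrow> 'a \<Rightarrow> real) \<Rightarrow> bool" where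
  "minimal_insoluble E I M \<longleftrightarrow>
     \<not> (\<exists>r. \<forall>i\<in>I. (\<Sum>e\<in>E. M i e * r e) > 0) \<and>
     (\<forall>J. J \<subset> I \<longrightarrow> (\<exists>r. \<forall>i\<in>J. (\<Sum>e\<in>E. M i e * r e) > 0))"

end

theory Submission
  imports Defs
begin

lemma strict_po_on_converse: "strict_po_on E P \<Longrightarrow> strict_po_on E (P\<inverse>)"
  by (auto simp: strict_po_on_def irrefl_def trans_def)

lemma strict_total_on_converse: "strict_total_on E L \<Longrightarrow> strict_total_on E (L\<inverse>)"
  by (auto simp: strict_total_on_def strict_po_on_converse total_on_def)

lemma strict_po_on_put_below:
  assumes "strict_po_on E P" "m \<in> E" "T \<subseteq> E" "m \<notin> T" "\<forall>t\<in>T. (t, m) \<notin> P"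
  shows "strict_po_on E (P \<union> {(a, b). (a = m \<or> (a, m) \<in> P) \<and> (\<exists>t\<in>T. b = t \<or> (t, b) \<in> P)})"
    (is "strict_po_on E ?P'")
  unfolding strict_po_on_def
proof (intro conjI)
  have P: "P \<subseteq> E \<times> E" "irrefl P" "trans P" using assms(1) by (auto simp: strict_po_on_def)
  show "?P' \<subseteq> E \<times> E" using P(1) assms(2,3) by auto
  show "irrefl ?P'" using P(2,3) assms(4,5) by (auto simp: irrefl_def dest: transD)
  show "trans ?P'" unfolding trans_def using P(2,3) assms(4,5) by (auto simp: irrefl_def dest: transD)
qed

lemma strict_po_on_total_extension:
  assumes "finite E" "strict_po_on E P"
  shows "\<exists>L. strict_total_on E L \<and> P \<subseteq> L"
  using assms(2)
proof (induction "card (E \<times> E - P)" arbitrary: P rule: less_induct)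
  case less
  show ?case
  proof (cases "total_on E P")
    case True
    then show ?thesis using less.prems by (auto simp: strict_total_on_def)
  next
    case False
    then obtain x y where xy: "x \<in> E" "y \<in> E" "x \<noteq> y" "(x, y) \<notin> P" "(y, x) \<notin> P"
      by (auto simp: total_on_def)
    let ?P' = "P \<union> {(a, b). (a = x \<or> (a, x) \<in> P) \<and> (\<exists>t\<in>{y}. b = t \<or> (t, b) \<in> P)}"
    have po: "strict_po_on E ?P'"
      by (rule strict_po_on_put_below[OF less.prems]) (use xy in auto)
    have "(x, y) \<in> ?P'" by simp
    then have "E \<times> E - ?P' \<subset> E \<times> E - P" using xy by blast
    then have "card (E \<times> E - ?P') < card (E \<times> E - P)"
      using assms(1) by (intro psubset_card_mono) auto
    then obtain L where "strict_total_on E L" "?P' \<subseteq> L"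
      using less.hyps[OF _ po] by blast
    then show ?thesis by blast
  qed
qed

lemma total_extension_put_below:
  assumes "finite E" "strict_po_on E P" "m \<in> E" "T \<subseteq> E" "m \<notin> T" "\<forall>t\<in>T. (t, m) \<notin> P"
  shows "\<exists>L. strict_total_on E L \<and> P \<subseteq> L \<and> (\<forall>t\<in>T. (m, t) \<in> L)"
proof -
  obtain L where "strict_total_on E L"
    "P \<union> {(a, b). (a = m \<or> (a, m) \<in> P) \<and> (\<exists>t\<in>T. b = t \<or> (t, b) \<in> P)} \<subseteq> L"
    using strict_po_on_total_extension[OF assms(1) strict_po_on_put_below[OF assms(2-6)]] by (elim exE conjE)
  then show ?thesis by blast
qed

lemma total_extension_put_above:
  assumes "finite E" "strict_po_on E P" "m \<in> E" "T \<subseteq> E" "m \<notin> T" "\<forall>t\<in>T. (m, t) \<notin> P"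
  shows "\<exists>L. strict_total_on E L \<and> P \<subseteq> L \<and> (\<forall>t\<in>T. (t, m) \<in> L)"
proof -
  have "\<forall>t\<in>T. (t, m) \<notin> P\<inverse>" using assms(6) by simp
  then obtain L where L: "strict_total_on E L" "P\<inverse> \<subseteq> L" "\<forall>t\<in>T. (m, t) \<in> L"
    using total_extension_put_below[OF assms(1) strict_po_on_converse[OF assms(2)] assms(3-5)] by blast
  have "strict_total_on E (L\<inverse>)" using strict_total_on_converse[OF L(1)] .
  moreover have "P \<subseteq> L\<inverse>" "\<forall>t\<in>T. (t, m) \<in> L\<inverse>" using L(2,3) by auto
  ultimately show ?thesis by blast
qed

lemma finite_strict_order_has_minimal:
  assumes "finite K" "K \<noteq> {}" "irrefl P" "trans P"
  shows "\<exists>p\<in>K. \<forall>y\<in>K. (y, p) \<notin> P"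
proof -
  have "wf (P \<inter> K \<times> K)"
  proof (rule finite_acyclic_wf)
    show "finite (P \<inter> K \<times> K)" using assms(1) by blast
    have "trans (P \<inter> K \<times> K)" using assms(4) by (auto simp: trans_def)
    then show "acyclic (P \<inter> K \<times> K)"
      using assms(3) by (simp add: acyclic_irrefl irrefl_def)
  qed
  then obtain p where "p \<in> K" "\<forall>y. (y, p) \<in> P \<inter> K \<times> K \<longrightarrow> y \<notin> K"
    using assms(2) unfolding wf_eq_minimal by blast
  then show ?thesis by blast
qed

lemma total_on_two_least:
  assumes "finite K" "total_on K P" "irrefl P" "trans P"
  obtains p q where "p = q \<or> (p, q) \<in> P"
    "\<forall>f\<in>K - {p, q}. p \<in> K \<and> q \<in> K \<and> (p, q) \<in> P \<and> (q, f) \<in> P"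
proof (cases "K = {}")
  case True
  show ?thesis by (rule that[of undefined undefined]) (simp_all add: True)
next
  case False
  then obtain p where p: "p \<in> K" "\<forall>y\<in>K. (y, p) \<notin> P"
    using finite_strict_order_has_minimal[OF assms(1) _ assms(3,4)] by blast
  show ?thesis
  proof (cases "K - {p} = {}")
    case True
    show ?thesis by (rule that[of p p]) (use True in blast)+
  next
    case False
    then obtain q where q: "q \<in> K - {p}" "\<forall>y\<in>K - {p}. (y, q) \<notin> P"
      using finite_strict_order_has_minimal[of "K - {p}" P] assms(1,3,4) by blast
    have "(p, q) \<in> P" using p q assms(2) unfolding total_on_def by blast
    moreover have "\<forall>f\<in>K - {p, q}. (q, f) \<in> P" using q assms(2) unfolding total_on_def by blast
    ultimately show ?thesis using p(1) q(1) by (intro that[of p q]) blast+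
  qed
qed

lemma circuits_tot_between:
  assumes "irrefl L" "trans L" "c \<in> circuits_tot L" "e1 \<noteq> e3"
    "c = ({e1, e3}, {e2}) \<or> c = ({e2}, {e1, e3})"
  shows "(e1, e2) \<in> L \<and> (e2, e3) \<in> L \<or> (e3, e2) \<in> L \<and> (e2, e1) \<in> L"
proof -
  obtain x1 x2 x3 where x: "(x1, x2) \<in> L" "(x2, x3) \<in> L"
    "c = ({x1, x3}, {x2}) \<or> c = ({x2}, {x1, x3})"
    using assms(3) unfolding circuits_tot_def by blast
  have "x1 \<noteq> x3" using x(1,2) assms(1,2) by (auto simp: irrefl_def dest: transD)
  then have "x2 = e2 \<and> {x1, x3} = {e1, e3}"
    using x(3) assms(4,5) by (auto simp: doubleton_eq_iff)
  then show ?thesis using x(1,2) by (auto simp: doubleton_eq_iff)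
qed

lemma circuits_po_cases:
  assumes "finite E" "strict_po_on E P" "c \<in> circuits_po E P"
  obtains a m b where "(a, m) \<in> P" "(m, b) \<in> P" "c = ({a, b}, {m}) \<or> c = ({m}, {a, b})"
proof -
  have P: "irrefl P" "trans P" using assms(2) by (auto simp: strict_po_on_def)
  have total: "irrefl L" "trans L" "L \<subseteq> E \<times> E" if "strict_total_on E L" for L
    using that by (auto simp: strict_total_on_def strict_po_on_def)
  have in_tot: "c \<in> circuits_tot L" if "strict_total_on E L" "P \<subseteq> L" for L
    using assms(3) that unfolding circuits_po_def by blast
  have asym: "(y, x) \<notin> L" if "strict_total_on E L" "(x, y) \<in> L" for L x y
    using total(1,2)[OF that(1)] that(2) by (auto simp: irrefl_def dest: transD)
  obtain L0 where L0: "strict_total_on E L0" "P \<subseteq> L0"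
    using strict_po_on_total_extension[OF assms(1,2)] by blast
  obtain e1 e2 e3 where e: "(e1, e2) \<in> L0" "(e2, e3) \<in> L0" "c = ({e1, e3}, {e2}) \<or> c = ({e2}, {e1, e3})"
    using in_tot[OF L0] unfolding circuits_tot_def by blast
  have "(e1, e3) \<in> L0" using e(1,2) total(2)[OF L0(1)] by (meson transD)
  then have ne: "e2 \<notin> {e1, e3}" "e1 \<noteq> e3"
    using e(1,2) total(1)[OF L0(1)] unfolding irrefl_def by auto
  have inE: "{e1, e3} \<subseteq> E" "e2 \<in> E" using e(1,2) total(3)[OF L0(1)] by auto
  have between: "(e1, e2) \<in> L \<and> (e2, e3) \<in> L \<or> (e3, e2) \<in> L \<and> (e2, e1) \<in> L"
    if "strict_total_on E L" "P \<subseteq> L" for L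
    using circuits_tot_between[OF total(1,2)[OF that(1)] in_tot[OF that] ne(2) e(3)] .
  have below: "(e1, e2) \<in> P \<or> (e3, e2) \<in> P"
  proof (rule ccontr)
    assume "\<not> ?thesis"
    then have "\<forall>t\<in>{e1, e3}. (t, e2) \<notin> P" by blast
    then obtain L where L: "strict_total_on E L" "P \<subseteq> L" "\<forall>t\<in>{e1, e3}. (e2, t) \<in> L"
      using total_extension_put_below[OF assms(1,2) inE(2,1) ne(1)] by blast
    show False using between[OF L(1,2)] asym[OF L(1)] L(3) by blast
  qed
  have above: "(e2, e1) \<in> P \<or> (e2, e3) \<in> P"
  proof (rule ccontr)
    assume "\<not> ?thesis"
    then have "\<forall>t\<in>{e1, e3}. (e2, t) \<notin> P" by blast
    then obtain L where L: "strict_total_on E L" "P \<subseteq> L" "\<forall>t\<in>{e1, e3}. (t, e2) \<in> L"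
      using total_extension_put_above[OF assms(1,2) inE(2,1) ne(1)] by blast
    show False using between[OF L(1,2)] asym[OF L(1)] L(3) by blast
  qed
  have "(e1, e2) \<in> P \<and> (e2, e3) \<in> P \<or> (e3, e2) \<in> P \<and> (e2, e1) \<in> P"
    using below above P unfolding irrefl_def trans_def by blast
  then show ?thesis
  proof
    assume "(e1, e2) \<in> P \<and> (e2, e3) \<in> P"
    then show ?thesis using e(3) by (intro that[of e1 e2 e3]) auto
  next
    assume "(e3, e2) \<in> P \<and> (e2, e1) \<in> P"
    then show ?thesis using e(3) by (intro that[of e3 e2 e1]) (auto simp: insert_commute)
  qed
qed

lemma circuits_po_chainI:
  assumes "(a, m) \<in> P" "(m, b) \<in> P"
  shows "({a, b}, {m}) \<in> circuits_po E P" "({m}, {a, b}) \<in> circuits_po E P"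
  using assms unfolding circuits_po_def circuits_tot_def by blast+

lemma chat_eq:
  assumes "ssupp c = {e, e', e''}" "e \<noteq> e'" "e \<noteq> e''" "(e', e'') \<in> P" "(e'', e') \<notin> P"
  shows "chat P \<theta> c e = ssign c e * sin_deg (\<theta> e'' - \<theta> e')"
proof -
  have "(THE s. \<exists>x y. ssupp c = {e, x, y} \<and> (x, y) \<in> P \<and> s = sin_deg (\<theta> y - \<theta> x))
      = sin_deg (\<theta> e'' - \<theta> e')"
  proof (rule the_equality)
    fix s assume "\<exists>x y. ssupp c = {e, x, y} \<and> (x, y) \<in> P \<and> s = sin_deg (\<theta> y - \<theta> x)"
    then obtain x y where xy: "{e, x, y} = {e, e', e''}" "(x, y) \<in> P" "s = sin_deg (\<theta> y - \<theta> x)"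
      using assms(1) by auto
    have "e' \<in> {e, x, y}" "e'' \<in> {e, x, y}" using xy(1) by auto
    then have "x = e' \<and> y = e''" using assms(2-5) xy(2) by auto
    then show "s = sin_deg (\<theta> e'' - \<theta> e')" using xy(3) by simp
  qed (use assms in blast)
  then show ?thesis using assms(1) by (simp add: chat_def)
qed

lemma chat_chain:
  assumes "irrefl P" "trans P" "(a, m) \<in> P" "(m, b) \<in> P"
  shows "chat P \<theta> ({a, b}, {m}) e =
    (if e = a then sin_deg (\<theta> b - \<theta> m) else if e = m then - sin_deg (\<theta> b - \<theta> a)
     else if e = b then sin_deg (\<theta> m - \<theta> a) else 0)"
proof -
  have P: "a \<noteq> m" "m \<noteq> b" "a \<noteq> b" "(a, b) \<in> P" "(m, a) \<notin> P" "(b, m) \<notin> P" "(b, a) \<notin> P"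
    using assms by (auto simp: irrefl_def dest: transD)
  have supp: "ssupp ({a, b}, {m}) = {a, m, b}" "ssupp ({a, b}, {m}) = {m, a, b}"
    "ssupp ({a, b}, {m}) = {b, a, m}"
    by (auto simp: ssupp_def)
  consider "e = a" | "e = m" | "e = b" | "e \<notin> {a, m, b}" by blast
  then show ?thesis
  proof cases
    case 1
    then show ?thesis using chat_eq[OF supp(1)] P assms(4) by (simp add: ssign_def)
  next
    case 2
    then show ?thesis using chat_eq[OF supp(2)] P by (simp add: ssign_def)
  next
    case 3
    then show ?thesis using chat_eq[OF supp(3)] P assms(3) by (simp add: ssign_def)
  next
    case 4
    then show ?thesis using supp(1) by (simp add: chat_def)
  qed
qed

lemma chat_swap:
  assumes "X \<inter> Y = {}"
  shows "chat P \<theta> (Y, X) e = - chat P \<theta> (X, Y) e"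
proof -
  have "ssupp (Y, X) = ssupp (X, Y)" by (auto simp: ssupp_def)
  moreover have "e \<in> ssupp (X, Y) \<Longrightarrow> ssign (Y, X) e = - ssign (X, Y) e"
    using assms by (auto simp: ssign_def ssupp_def)
  ultimately show ?thesis unfolding chat_def by simp
qed

lemma sin_deg_three_term:
  "sin_deg (b - m) * sin_deg (a + \<phi>) - sin_deg (b - a) * sin_deg (m + \<phi>)
     + sin_deg (m - a) * sin_deg (b + \<phi>) = 0"
  unfolding sin_deg_def by (simp add: distrib_right left_diff_distrib add_divide_distrib
      diff_divide_distrib sin_add sin_diff algebra_simps)

lemma sin_deg_gt_zero:
  assumes "0 < d" "d < 180"
  shows "0 < sin_deg d"
proof -
  have "d * pi < 180 * pi" using assms(2) pi_gt_zero by (rule mult_strict_right_mono)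
  then have "d * pi / 180 < pi" by simp
  moreover have "0 < d * pi / 180" using assms(1) by simp
  ultimately show ?thesis unfolding sin_deg_def by (intro sin_gt_zero)
qed

lemma sin_deg_pos:
  assumes "theta_respects E P \<theta>" "(x, y) \<in> P" "x \<in> E" "y \<in> E"
  shows "0 < sin_deg (\<theta> y - \<theta> x)"
proof -
  have "0 < \<theta> x" "\<theta> y < 180" "\<theta> x < \<theta> y"
    using assms unfolding theta_respects_def by auto
  then show ?thesis by (intro sin_deg_gt_zero) auto
qed

lemma chat_chain_orthogonal:
  assumes "finite E" "a \<in> E" "m \<in> E" "b \<in> E" "irrefl P" "trans P" "(a, m) \<in> P" "(m, b) \<in> P"
  shows "(\<Sum>e\<in>E. chat P \<theta> ({a, b}, {m}) e * sin_deg (\<theta> e + \<phi>)) = 0"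
proof -
  have ne: "a \<noteq> m" "m \<noteq> b" "a \<noteq> b"
    using assms(5-8) by (auto simp: irrefl_def dest: transD)
  have "(\<Sum>e\<in>E. chat P \<theta> ({a, b}, {m}) e * sin_deg (\<theta> e + \<phi>))
      = (\<Sum>e\<in>{a, m, b}. chat P \<theta> ({a, b}, {m}) e * sin_deg (\<theta> e + \<phi>))"
    using assms(1-4) by (intro sum.mono_neutral_right) (auto simp: chat_chain[OF assms(5-8)])
  also have "\<dots> = sin_deg (\<theta> b - \<theta> m) * sin_deg (\<theta> a + \<phi>)
      - sin_deg (\<theta> b - \<theta> a) * sin_deg (\<theta> m + \<phi>) + sin_deg (\<theta> m - \<theta> a) * sin_deg (\<theta> b + \<phi>)"
    using ne by (simp add: chat_chain[OF assms(5-8)])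
  also have "\<dots> = 0" by (rule sin_deg_three_term)
  finally show ?thesis .
qed

lemma circuits_po_chat_orthogonal:
  assumes "finite E" "strict_po_on E P" "c \<in> circuits_po E P"
  shows "(\<Sum>e\<in>E. chat P \<theta> c e * sin_deg (\<theta> e + \<phi>)) = 0"
proof -
  have P: "P \<subseteq> E \<times> E" "irrefl P" "trans P" using assms(2) by (auto simp: strict_po_on_def)
  obtain a m b where amb: "(a, m) \<in> P" "(m, b) \<in> P" "c = ({a, b}, {m}) \<or> c = ({m}, {a, b})"
    using circuits_po_cases[OF assms] .
  have "a \<in> E" "m \<in> E" "b \<in> E" using amb(1,2) P(1) by auto
  note orth = chat_chain_orthogonal[OF assms(1) this P(2,3) amb(1,2)]
  have "{a, b} \<inter> {m} = {}" using amb(1,2) P(2,3) by (auto simp: irrefl_def dest: transD)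
  then have "(\<Sum>e\<in>E. chat P \<theta> ({m}, {a, b}) e * sin_deg (\<theta> e + \<phi>))
      = - (\<Sum>e\<in>E. chat P \<theta> ({a, b}, {m}) e * sin_deg (\<theta> e + \<phi>))"
    by (simp only: chat_swap sum_negf mult_minus_left)
  then show ?thesis using amb(3) orth by auto
qed

definition rows_independent :: "'r set \<Rightarrow> 'e set \<Rightarrow> ('r \<Rightarrow> 'e \<Rightarrow> real) \<Rightarrow> bool" where
  "rows_independent R C M \<longleftrightarrow> (\<forall>\<mu>. (\<forall>e\<in>C. (\<Sum>i\<in>R. \<mu> i * M i e) = 0) \<longrightarrow> (\<forall>i\<in>R. \<mu> i = 0))"

definition simplex_dependency ::
  "'r set \<Rightarrow> 'e set \<Rightarrow> ('r \<Rightarrow> 'e \<Rightarrow> real) \<Rightarrow> ('r \<Rightarrow> real) \<Rightarrow> bool" where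
  "simplex_dependency R C M \<gamma> \<longleftrightarrow> (\<forall>i\<in>R. 0 < \<gamma> i) \<and> (\<forall>e\<in>C. (\<Sum>i\<in>R. \<gamma> i * M i e) = 0) \<and>
     (\<forall>\<mu>. (\<forall>e\<in>C. (\<Sum>i\<in>R. \<mu> i * M i e) = 0) \<longrightarrow> (\<exists>t. \<forall>i\<in>R. \<mu> i = t * \<gamma> i))"

lemma rows_independentD:
  "rows_independent R C M \<Longrightarrow> \<forall>e\<in>C. (\<Sum>i\<in>R. \<mu> i * M i e) = 0 \<Longrightarrow> \<forall>i\<in>R. \<mu> i = 0"
  unfolding rows_independent_def by blast

lemma simplex_dependencyD:
  assumes "simplex_dependency R C M \<gamma>"
  shows "\<forall>i\<in>R. 0 < \<gamma> i" "\<forall>e\<in>C. (\<Sum>i\<in>R. \<gamma> i * M i e) = 0"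
    and "\<forall>e\<in>C. (\<Sum>i\<in>R. \<mu> i * M i e) = 0 \<Longrightarrow> \<exists>t. \<forall>i\<in>R. \<mu> i = t * \<gamma> i"
  using assms unfolding simplex_dependency_def by blast+

lemma sum_mult_sum_swap:
  fixes u k :: "_ \<Rightarrow> real"
  shows "(\<Sum>e\<in>C. u e * (\<Sum>b\<in>R. k b * v b e)) = (\<Sum>b\<in>R. k b * (\<Sum>e\<in>C. u e * v b e))"
proof -
  have "(\<Sum>e\<in>C. u e * (\<Sum>b\<in>R. k b * v b e)) = (\<Sum>e\<in>C. \<Sum>b\<in>R. k b * (u e * v b e))"
    by (simp add: sum_distrib_left mult.left_commute)
  also have "\<dots> = (\<Sum>b\<in>R. \<Sum>e\<in>C. k b * (u e * v b e))" by (rule sum.swap)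
  finally show ?thesis by (simp add: sum_distrib_left)
qed

lemma sum_mult_delta:
  assumes "finite R" "a \<in> R"
  shows "(\<Sum>b\<in>R. k b * (if a = b then 1 else 0)) = (k a :: real)"
proof -
  have "(\<Sum>b\<in>R. k b * (if a = b then 1 else 0)) = (\<Sum>b\<in>R. if a = b then k b else 0)"
    by (intro sum.cong) auto
  then show ?thesis using assms by simp
qed

lemma sum_extend_by_zero:
  fixes M :: "'r \<Rightarrow> 'e \<Rightarrow> real"
  assumes "finite R" "S \<subseteq> R"
  shows "(\<Sum>i\<in>R. (if i \<in> S then \<mu> i else 0) * M i e) = (\<Sum>i\<in>S. \<mu> i * M i e)"
proof -
  have "(\<Sum>i\<in>R. (if i \<in> S then \<mu> i else 0) * M i e) = (\<Sum>i\<in>R. if i \<in> S then \<mu> i * M i e else 0)"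
    by (intro sum.cong) auto
  also have "\<dots> = (\<Sum>i\<in>R \<inter> S. \<mu> i * M i e)" using assms(1) by (simp add: sum.inter_restrict)
  also have "R \<inter> S = S" using assms(2) by blast
  finally show ?thesis .
qed

lemma rows_independent_subset:
  assumes "finite R" "rows_independent R C M" "S \<subseteq> R"
  shows "rows_independent S C M"
  unfolding rows_independent_def
proof (intro allI impI ballI)
  fix \<mu> i assume dep: "\<forall>e\<in>C. (\<Sum>i\<in>S. \<mu> i * M i e) = 0" and i: "i \<in> S"
  have "\<forall>e\<in>C. (\<Sum>j\<in>R. (if j \<in> S then \<mu> j else 0) * M j e) = 0"
    using dep by (simp add: sum_extend_by_zero[OF assms(1,3)])
  then have "\<forall>j\<in>R. (if j \<in> S then \<mu> j else 0) = 0"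
    by (rule rows_independentD[OF assms(2)])
  then have "(if i \<in> S then \<mu> i else 0) = 0" using i assms(3) by blast
  then show "\<mu> i = 0" using i by simp
qed

lemma rows_independent_new_dual_vector:
  assumes "finite C" "finite R" "a0 \<notin> R" "rows_independent (insert a0 R) C M"
    and w: "\<forall>a\<in>R. \<forall>b\<in>R. (\<Sum>e\<in>C. M a e * w b e) = (if a = b then 1 else 0)"
  shows "\<exists>z. (\<forall>b\<in>R. (\<Sum>e\<in>C. M b e * z e) = 0) \<and> (\<Sum>e\<in>C. M a0 e * z e) = 1"
proof -
  define c where "c b = (\<Sum>e\<in>C. M a0 e * w b e)" for b
  define d where "d e = M a0 e - (\<Sum>b\<in>R. c b * M b e)" for e
  define k where "k b = (\<Sum>e\<in>C. M b e * d e)" for b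
  define z where "z e = d e - (\<Sum>b\<in>R. k b * w b e)" for e
  have z_pair: "(\<Sum>e\<in>C. M a e * z e) = k a - (\<Sum>b\<in>R. k b * (\<Sum>e\<in>C. M a e * w b e))" for a
  proof -
    have "(\<Sum>e\<in>C. M a e * z e) = k a - (\<Sum>e\<in>C. M a e * (\<Sum>b\<in>R. k b * w b e))"
      by (simp add: z_def k_def right_diff_distrib sum_subtractf)
    also have "(\<Sum>e\<in>C. M a e * (\<Sum>b\<in>R. k b * w b e)) = (\<Sum>b\<in>R. k b * (\<Sum>e\<in>C. M a e * w b e))"
      by (rule sum_mult_sum_swap)
    finally show ?thesis .
  qed
  have orth: "(\<Sum>e\<in>C. M a e * z e) = 0" if "a \<in> R" for a
  proof -
    have "(\<Sum>b\<in>R. k b * (\<Sum>e\<in>C. M a e * w b e)) = (\<Sum>b\<in>R. k b * (if a = b then 1 else 0))"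
      using w that by (intro sum.cong) auto
    then show ?thesis using z_pair[of a] sum_mult_delta[OF assms(2) that, of k] by simp
  qed
  have "d e * d e = M a0 e * d e - d e * (\<Sum>b\<in>R. c b * M b e)" for e
    by (simp only: mult.commute[of "M a0 e"] right_diff_distrib[symmetric] d_def)
  then have dd: "(\<Sum>e\<in>C. d e * d e) = k a0 - (\<Sum>e\<in>C. d e * (\<Sum>b\<in>R. c b * M b e))"
    by (simp add: sum_subtractf k_def)
  have "(\<Sum>e\<in>C. d e * (\<Sum>b\<in>R. c b * M b e)) = (\<Sum>b\<in>R. c b * (\<Sum>e\<in>C. d e * M b e))"
    by (rule sum_mult_sum_swap)
  then have swap: "(\<Sum>e\<in>C. d e * (\<Sum>b\<in>R. c b * M b e)) = (\<Sum>b\<in>R. k b * c b)"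
    by (simp add: k_def mult.commute)
  have "(\<Sum>e\<in>C. M a0 e * z e) = k a0 - (\<Sum>b\<in>R. k b * c b)"
    using z_pair[of a0] by (simp add: c_def)
  then have a0: "(\<Sum>e\<in>C. M a0 e * z e) = (\<Sum>e\<in>C. d e * d e)"
    using dd swap by simp
  have "\<exists>e\<in>C. d e \<noteq> 0"
  proof (rule ccontr)
    assume no: "\<not> ?thesis"
    have "(\<Sum>i\<in>R. (if i = a0 then 1 else - c i) * M i e) = - (\<Sum>b\<in>R. c b * M b e)" for e
      using assms(3) by (auto simp: sum_negf[symmetric] intro: sum.cong)
    then have "\<forall>e\<in>C. (\<Sum>i\<in>insert a0 R. (if i = a0 then 1 else - c i) * M i e) = 0"
      using no assms(2,3) by (simp add: d_def)
    then show False
      using rows_independentD[OF assms(4)] by fastforce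
  qed
  then obtain e0 where "e0 \<in> C" "d e0 \<noteq> 0" by blast
  then have pos: "0 < (\<Sum>e\<in>C. d e * d e)"
    by (intro sum_pos2[OF assms(1)]) (auto simp: zero_less_mult_iff)
  have scale: "(\<Sum>e\<in>C. M a e * z e / D) = (\<Sum>e\<in>C. M a e * z e) / D" for a D
    by (simp add: sum_divide_distrib)
  show ?thesis
    using orth a0 pos by (intro exI[of _ "\<lambda>e. z e / (\<Sum>e\<in>C. d e * d e)"]) (simp add: scale)
qed

lemma rows_independent_dual_basis:
  assumes "finite C" "finite R" "rows_independent R C M"
  shows "\<exists>w. \<forall>a\<in>R. \<forall>b\<in>R. (\<Sum>e\<in>C. M a e * w b e) = (if a = b then 1 else 0)"
  using assms(2,3)
proof (induction R rule: finite_induct)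
  case (insert a0 R)
  have "rows_independent R C M"
    using rows_independent_subset[OF finite.insertI[OF insert.hyps(1)] insert.prems subset_insertI] .
  then obtain w where w: "\<forall>a\<in>R. \<forall>b\<in>R. (\<Sum>e\<in>C. M a e * w b e) = (if a = b then 1 else 0)"
    using insert.IH by blast
  obtain z where z: "\<forall>b\<in>R. (\<Sum>e\<in>C. M b e * z e) = 0" "(\<Sum>e\<in>C. M a0 e * z e) = 1"
    using rows_independent_new_dual_vector[OF assms(1) insert.hyps(1,2) insert.prems w] by blast
  define w' where "w' b = (if b = a0 then z else (\<lambda>e. w b e - (\<Sum>e'\<in>C. M a0 e' * w b e') * z e))" for b
  have "(\<Sum>e\<in>C. M a e * w' b e) = (if a = b then 1 else 0)"
    if a: "a \<in> insert a0 R" and b: "b \<in> insert a0 R" for a b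
  proof (cases "b = a0")
    case True
    then have "w' b = z" by (simp add: w'_def)
    then show ?thesis using a z insert.hyps(2) True by auto
  next
    case False
    with b have "b \<in> R" by simp
    define cb where "cb = (\<Sum>e\<in>C. M a0 e * w b e)"
    have "w' b = (\<lambda>e. w b e - cb * z e)" using False by (simp add: w'_def cb_def)
    then have eq: "(\<Sum>e\<in>C. M a e * w' b e) = (\<Sum>e\<in>C. M a e * w b e) - cb * (\<Sum>e\<in>C. M a e * z e)"
      by (simp add: right_diff_distrib sum_subtractf sum_distrib_left mult.left_commute)
    consider "a = a0" | "a \<in> R" using a by blast
    then show ?thesis
    proof cases
      case 1
      then show ?thesis using eq z(2) False by (simp add: cb_def)
    next
      case 2
      then show ?thesis using eq z(1) w \<open>b \<in> R\<close> by simp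
    qed
  qed
  then show ?case by (intro exI[of _ w'] ballI)
qed simp

lemma rows_independent_solvable:
  assumes "finite C" "finite R" "rows_independent R C M"
  shows "\<exists>r. \<forall>a\<in>R. (\<Sum>e\<in>C. M a e * r e) = t a"
proof -
  obtain w where w: "\<forall>a\<in>R. \<forall>b\<in>R. (\<Sum>e\<in>C. M a e * w b e) = (if a = b then 1 else 0)"
    using rows_independent_dual_basis[OF assms] by blast
  show ?thesis
  proof (rule exI[of _ "\<lambda>e. \<Sum>b\<in>R. t b * w b e"], intro ballI)
    fix a assume a: "a \<in> R"
    have "(\<Sum>e\<in>C. M a e * (\<Sum>b\<in>R. t b * w b e)) = (\<Sum>b\<in>R. t b * (\<Sum>e\<in>C. M a e * w b e))"
      by (rule sum_mult_sum_swap)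
    also have "\<dots> = (\<Sum>b\<in>R. t b * (if a = b then 1 else 0))"
      using w a by (intro sum.cong) auto
    also have "\<dots> = t a" by (rule sum_mult_delta[OF assms(2) a])
    finally show "(\<Sum>e\<in>C. M a e * (\<Sum>b\<in>R. t b * w b e)) = t a" .
  qed
qed

lemma simplex_dependency_delete_row:
  fixes M :: "'r \<Rightarrow> 'e \<Rightarrow> real"
  assumes "finite R" "simplex_dependency R C M \<gamma>" "i0 \<in> R"
  shows "rows_independent (R - {i0}) C M"
  unfolding rows_independent_def
proof (intro allI impI)
  fix \<mu> assume "\<forall>e\<in>C. (\<Sum>i\<in>R - {i0}. \<mu> i * M i e) = 0"
  then have "\<forall>e\<in>C. (\<Sum>i\<in>R. (if i \<in> R - {i0} then \<mu> i else 0) * M i e) = 0"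
    by (simp only: sum_extend_by_zero[OF assms(1) Diff_subset])
  then obtain t where t: "\<forall>i\<in>R. (if i \<in> R - {i0} then \<mu> i else 0) = t * \<gamma> i"
    using simplex_dependencyD(3)[OF assms(2), of "\<lambda>i. if i \<in> R - {i0} then \<mu> i else 0"] by blast
  have "t * \<gamma> i0 = 0" "0 < \<gamma> i0"
    using t assms(3) simplex_dependencyD(1)[OF assms(2)] by auto
  then have "t = 0" by simp
  show "\<forall>i\<in>R - {i0}. \<mu> i = 0"
  proof
    fix i assume i: "i \<in> R - {i0}"
    then have "(if i \<in> R - {i0} then \<mu> i else 0) = t * \<gamma> i" using t by blast
    then show "\<mu> i = 0" using i \<open>t = 0\<close> by simp
  qed
qed

lemma minimal_insoluble_if_simplex_dependency:
  fixes M :: "'r \<Rightarrow> 'e \<Rightarrow> real"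
  assumes "finite C" "finite R" "R \<noteq> {}" "simplex_dependency R C M \<gamma>"
  shows "minimal_insoluble C R M"
  unfolding minimal_insoluble_def
proof (intro conjI allI impI notI)
  assume "\<exists>r. \<forall>i\<in>R. 0 < (\<Sum>e\<in>C. M i e * r e)"
  then obtain r where r: "\<forall>i\<in>R. 0 < (\<Sum>e\<in>C. M i e * r e)" by blast
  have "0 < (\<Sum>i\<in>R. \<gamma> i * (\<Sum>e\<in>C. M i e * r e))"
    using assms(2-4) r by (intro sum_pos) (auto simp: simplex_dependency_def)
  also have "\<dots> = (\<Sum>i\<in>R. \<gamma> i * (\<Sum>e\<in>C. r e * M i e))" by (simp add: mult.commute)
  also have "\<dots> = (\<Sum>e\<in>C. r e * (\<Sum>i\<in>R. \<gamma> i * M i e))" by (rule sum_mult_sum_swap[symmetric])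
  also have "\<dots> = 0" using assms(4) by (simp add: simplex_dependency_def)
  finally show False by simp
next
  fix J assume J: "J \<subset> R"
  then obtain i0 where i0: "i0 \<in> R" "i0 \<notin> J" by blast
  obtain r where r: "\<forall>i\<in>R - {i0}. (\<Sum>e\<in>C. M i e * r e) = 1"
    using rows_independent_solvable[OF assms(1) finite_Diff[OF assms(2)]
        simplex_dependency_delete_row[OF assms(2,4) i0(1)], where t = "\<lambda>_. 1"] by blast
  show "\<exists>r. \<forall>i\<in>J. 0 < (\<Sum>e\<in>C. M i e * r e)"
  proof (intro exI[of _ r] ballI)
    fix i assume "i \<in> J"
    then have "i \<in> R - {i0}" using J i0(2) by blast
    then show "0 < (\<Sum>e\<in>C. M i e * r e)" using r by simp
  qed
qed

lemma simplex_dependency_row_nonzero: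
  fixes M :: "'r \<Rightarrow> 'e \<Rightarrow> real"
  assumes "finite R" "simplex_dependency R C M \<gamma>" "a \<in> R" "a' \<in> R" "a \<noteq> a'"
  shows "\<exists>e\<in>C. M a e \<noteq> 0"
proof (rule ccontr)
  assume "\<not> ?thesis"
  then have "\<forall>e\<in>C. (\<Sum>i\<in>R. (if i \<in> {a} then 1 else 0) * M i e) = 0"
    using assms(3) sum_extend_by_zero[OF assms(1), of "{a}" "\<lambda>_. 1" M] by simp
  then obtain t where t: "\<forall>i\<in>R. (if i \<in> {a} then 1 else 0) = t * \<gamma> i"
    using simplex_dependencyD(3)[OF assms(2), of "\<lambda>i. if i \<in> {a} then 1 else 0"] by blast
  have "t * \<gamma> a' = 0" "t * \<gamma> a = 1" "0 < \<gamma> a'"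
    using t assms(3-5) simplex_dependencyD(1)[OF assms(2)] by auto
  then show False by simp
qed

lemma simplex_dependency_null_columns:
  assumes "simplex_dependency R C M \<gamma>" "\<forall>e\<in>D. (\<Sum>i\<in>R. \<gamma> i * M i e) = 0"
  shows "simplex_dependency R (C \<union> D) M \<gamma>"
  unfolding simplex_dependency_def
  using simplex_dependencyD[OF assms(1)] assms(2) by blast

lemma sum_pivot_rows:
  fixes M :: "'r \<Rightarrow> 'e \<Rightarrow> real"
  assumes "finite R" "finite K" "inj_on new_row K" "new_row ` K \<inter> R = {}" "e \<in> C \<union> K"
    and pivot: "\<forall>f\<in>K. \<forall>e\<in>C \<union> K - {f}. M (new_row f) e = 0"
  shows "(\<Sum>i\<in>R \<union> new_row ` K. \<mu> i * M i e)
    = (\<Sum>a\<in>R. \<mu> a * M a e) + (if e \<in> K then \<mu> (new_row e) * M (new_row e) e else 0)"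
proof -
  have "(\<Sum>i\<in>R \<union> new_row ` K. \<mu> i * M i e)
      = (\<Sum>a\<in>R. \<mu> a * M a e) + (\<Sum>i\<in>new_row ` K. \<mu> i * M i e)"
    using assms(1,2,4) by (intro sum.union_disjoint) auto
  also have "(\<Sum>i\<in>new_row ` K. \<mu> i * M i e) = (\<Sum>f\<in>K. \<mu> (new_row f) * M (new_row f) e)"
    by (simp add: sum.reindex[OF assms(3)])
  also have "(\<Sum>f\<in>K. \<mu> (new_row f) * M (new_row f) e) = (\<Sum>f\<in>K. if e = f then \<mu> (new_row e) * M (new_row e) e else 0)"
    using pivot assms(5) by (intro sum.cong) auto
  finally show ?thesis using assms(2) by simp
qed

text \<open>Each new column f gets a new new_row with a single nonzero entry in the columns so far, and the
  sign condition makes the coefficient that cancels column f positive.\<close>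
lemma simplex_dependency_add_rows:
  fixes M :: "'r \<Rightarrow> 'e \<Rightarrow> real"
  assumes "finite R" "finite K" "simplex_dependency R C M \<gamma>" "K \<inter> C = {}"
    "inj_on new_row K" "new_row ` K \<inter> R = {}"
    and pivot: "\<forall>f\<in>K. \<forall>e\<in>C \<union> K - {f}. M (new_row f) e = 0"
    and sign: "\<forall>f\<in>K. (\<Sum>a\<in>R. \<gamma> a * M a f) * M (new_row f) f < 0"
  shows "\<exists>\<gamma>'. simplex_dependency (R \<union> new_row ` K) (C \<union> K) M \<gamma>'"
proof -
  define s where "s f = (\<Sum>a\<in>R. \<gamma> a * M a f)" for f
  define \<gamma>' where "\<gamma>' i = (if i \<in> R then \<gamma> i else - s (inv_into K new_row i) / M i (inv_into K new_row i))" for i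
  have \<gamma>'_row: "\<gamma>' (new_row f) = - s f / M (new_row f) f" if "f \<in> K" for f
    using that assms(5,6) by (auto simp: \<gamma>'_def)
  note col = sum_pivot_rows[OF assms(1,2,5,6) _ pivot]
  note \<gamma> = simplex_dependencyD[OF assms(3)]
  have nz: "s f * M (new_row f) f < 0" "M (new_row f) f \<noteq> 0" if "f \<in> K" for f
    using sign that by (auto simp: s_def)
  have "\<forall>i\<in>R \<union> new_row ` K. 0 < \<gamma>' i"
  proof
    fix i assume "i \<in> R \<union> new_row ` K"
    then consider "i \<in> R" | f where "f \<in> K" "i = new_row f" by blast
    then show "0 < \<gamma>' i"
    proof cases
      case 1
      then show ?thesis using \<gamma>(1) by (simp add: \<gamma>'_def)
    next
      case 2
      then show ?thesis using nz(1)[OF 2(1)] by (auto simp: \<gamma>'_row divide_less_0_iff mult_less_0_iff)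
    qed
  qed
  moreover have "\<forall>e\<in>C \<union> K. (\<Sum>i\<in>R \<union> new_row ` K. \<gamma>' i * M i e) = 0"
  proof
    fix e assume e: "e \<in> C \<union> K"
    have "(\<Sum>a\<in>R. \<gamma>' a * M a e) = s e"
      unfolding s_def by (intro sum.cong) (auto simp: \<gamma>'_def)
    then show "(\<Sum>i\<in>R \<union> new_row ` K. \<gamma>' i * M i e) = 0"
      using e \<gamma>(2) assms(4) nz(2) by (cases "e \<in> K") (auto simp: col \<gamma>'_row s_def)
  qed
  moreover have "\<exists>t. \<forall>i\<in>R \<union> new_row ` K. \<mu> i = t * \<gamma>' i"
    if dep: "\<forall>e\<in>C \<union> K. (\<Sum>i\<in>R \<union> new_row ` K. \<mu> i * M i e) = 0" for \<mu>
  proof -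
    have "\<forall>e\<in>C. (\<Sum>i\<in>R. \<mu> i * M i e) = 0"
    proof
      fix e assume "e \<in> C"
      moreover from this have "e \<notin> K" using assms(4) by blast
      ultimately show "(\<Sum>i\<in>R. \<mu> i * M i e) = 0" using dep col[of e \<mu>] by simp
    qed
    then obtain t where t: "\<forall>i\<in>R. \<mu> i = t * \<gamma> i" using \<gamma>(3) by blast
    have "\<mu> (new_row f) = t * \<gamma>' (new_row f)" if "f \<in> K" for f
    proof -
      have "(\<Sum>a\<in>R. \<mu> a * M a f) + \<mu> (new_row f) * M (new_row f) f = 0"
        using dep col[of f \<mu>] that by simp
      moreover have "(\<Sum>a\<in>R. \<mu> a * M a f) = t * s f"
        using t by (simp add: s_def sum_distrib_left mult.assoc)
      ultimately have "t * s f + \<mu> (new_row f) * M (new_row f) f = 0" by simp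
      then show ?thesis using nz(2)[OF that] by (simp add: \<gamma>'_row[OF that] field_simps)
    qed
    then show ?thesis using t by (auto simp: \<gamma>'_def)
  qed
  ultimately show ?thesis unfolding simplex_dependency_def by (intro exI[of _ \<gamma>']) blast
qed

lemma sin_deg_antisym: "sin_deg (x - y) = - sin_deg (y - x)"
proof -
  have "(x - y) * pi / 180 = - ((y - x) * pi / 180)" by (simp add: field_simps)
  then show ?thesis by (simp add: sin_deg_def)
qed

text \<open>Two distinct angles with nonzero difference make the two sinusoid columns independent.\<close>
lemma sinusoid_orthogonal_two_points:
  fixes y :: "'e \<Rightarrow> real"
  assumes "finite C" "\<forall>e\<in>C - {p, q}. y e = 0" "p \<noteq> q \<Longrightarrow> sin_deg (\<theta> q - \<theta> p) \<noteq> 0"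
    "\<forall>\<phi>. (\<Sum>e\<in>C. y e * sin_deg (\<theta> e + \<phi>)) = 0"
  shows "\<forall>e\<in>C. y e = 0"
proof -
  define z where "z e = (if e \<in> C then y e else 0)" for e
  have two: "z p * sin_deg (\<theta> p + \<phi>) + (if q = p then 0 else z q * sin_deg (\<theta> q + \<phi>)) = 0" for \<phi>
  proof -
    have "(\<Sum>e\<in>C. y e * sin_deg (\<theta> e + \<phi>)) = (\<Sum>e\<in>C \<union> {p, q}. z e * sin_deg (\<theta> e + \<phi>))"
      using assms(1) by (intro sum.mono_neutral_cong_left) (auto simp: z_def)
    also have "\<dots> = (\<Sum>e\<in>{p, q}. z e * sin_deg (\<theta> e + \<phi>))"
      using assms(1,2) by (intro sum.mono_neutral_right) (auto simp: z_def)
    finally show ?thesis using assms(4) by (cases "p = q") auto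
  qed
  have "z p = 0 \<and> z q = 0"
  proof (cases "p = q")
    case True
    have "sin_deg (\<theta> p + (90 - \<theta> p)) = 1" by (simp add: sin_deg_def)
    then show ?thesis using two[of "90 - \<theta> p"] True by simp
  next
    case False
    have "sin_deg (\<theta> p + - \<theta> p) = 0" "sin_deg (\<theta> q + - \<theta> q) = 0" by (simp_all add: sin_deg_def)
    then have "z q * sin_deg (\<theta> q - \<theta> p) = 0" "z p * sin_deg (\<theta> p - \<theta> q) = 0"
      using two[of "- \<theta> p"] two[of "- \<theta> q"] False by simp_all
    then show ?thesis using assms(3) False sin_deg_antisym[of "\<theta> p" "\<theta> q"] by auto
  qed
  then show ?thesis using assms(2) by (auto simp: z_def split: if_splits)
qed

lemma simplex_dependency_sinusoid_columns:
  fixes M :: "'r \<Rightarrow> 'e \<Rightarrow> real"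
  assumes "finite E" "simplex_dependency R C M \<gamma>" "C \<subseteq> E" "E - C \<subseteq> {p, q}"
    "p \<noteq> q \<Longrightarrow> sin_deg (\<theta> q - \<theta> p) \<noteq> 0"
    and orth: "\<forall>i\<in>R. \<forall>\<phi>. (\<Sum>e\<in>E. M i e * sin_deg (\<theta> e + \<phi>)) = 0"
  shows "simplex_dependency R E M \<gamma>"
proof -
  define y where "y e = (\<Sum>i\<in>R. \<gamma> i * M i e)" for e
  have "(\<Sum>e\<in>E. y e * sin_deg (\<theta> e + \<phi>)) = 0" for \<phi>
  proof -
    have "(\<Sum>e\<in>E. y e * sin_deg (\<theta> e + \<phi>)) = (\<Sum>i\<in>R. \<gamma> i * (\<Sum>e\<in>E. M i e * sin_deg (\<theta> e + \<phi>)))"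
      unfolding y_def sum_distrib_right sum_distrib_left mult.assoc by (rule sum.swap)
    then show ?thesis using orth by simp
  qed
  moreover have "\<forall>e\<in>E - {p, q}. y e = 0"
    using assms(2,4) unfolding y_def simplex_dependency_def by blast
  ultimately have "\<forall>e\<in>E. y e = 0"
    using sinusoid_orthogonal_two_points[OF assms(1) _ assms(5)] by blast
  then have "simplex_dependency R (C \<union> E) M \<gamma>"
    using simplex_dependency_null_columns[OF assms(2)] unfolding y_def by blast
  then show ?thesis using assms(3) by (simp add: Un_absorb1)
qed

lemma chat_completion_circuit:
  assumes "irrefl P" "trans P" "(p, q) \<in> P" "(q, f) \<in> P" "e \<noteq> p" "e \<noteq> q"
  shows "chat P \<theta> ({p, f}, {q}) e = (if e = f then sin_deg (\<theta> q - \<theta> p) else 0)"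
    and "chat P \<theta> ({q}, {p, f}) e = (if e = f then - sin_deg (\<theta> q - \<theta> p) else 0)"
proof -
  show pos: "chat P \<theta> ({p, f}, {q}) e = (if e = f then sin_deg (\<theta> q - \<theta> p) else 0)"
    using chat_chain[OF assms(1-4), of \<theta> e] assms(5,6) by simp
  have "{p, f} \<inter> {q} = {}" using assms(1-4) by (auto simp: irrefl_def dest: transD)
  then show "chat P \<theta> ({q}, {p, f}) e = (if e = f then - sin_deg (\<theta> q - \<theta> p) else 0)"
    using chat_swap[of "{p, f}" "{q}" P \<theta> e] pos by simp
qed

text \<open>The completion: for every column f beyond C, add the circuit on p < q < f whose sign makes
  its coefficient in the dependency positive; columns where the dependency already vanishes need
  no new row.\<close>
lemma simplex_dependency_completion:
  fixes \<theta> :: "'a \<Rightarrow> real"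
  assumes "finite A" "finite K" "simplex_dependency A C (chat P \<theta>) \<gamma>"
    "strict_po_on E P" "theta_respects E P \<theta>" "K \<inter> C = {}"
    "K \<noteq> {} \<Longrightarrow> p \<notin> C \<union> K \<and> q \<notin> C \<union> K \<and> (p, q) \<in> P" "\<forall>f\<in>K. (q, f) \<in> P"
    "\<forall>a\<in>A. \<exists>e\<in>C. chat P \<theta> a e \<noteq> 0"
  shows "\<exists>B \<subseteq> (\<lambda>f. ({p, f}, {q})) ` K \<union> (\<lambda>f. ({q}, {p, f})) ` K.
    \<exists>\<gamma>'. simplex_dependency (A \<union> B) (C \<union> K) (chat P \<theta>) \<gamma>'"
proof -
  have P: "P \<subseteq> E \<times> E" "irrefl P" "trans P" using assms(4) by (auto simp: strict_po_on_def)
  define s where "s f = (\<Sum>a\<in>A. \<gamma> a * chat P \<theta> a f)" for f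
  define K' where "K' = {f \<in> K. s f \<noteq> 0}"
  define new_row where "new_row f = (if s f < 0 then ({p, f}, {q}) else ({q}, {p, f}))" for f
  have base: "p \<notin> C \<union> K" "q \<notin> C \<union> K" "(p, q) \<in> P" "0 < sin_deg (\<theta> q - \<theta> p)" if "f \<in> K" for f
    using assms(7) that sin_deg_pos[OF assms(5)] P(1) by blast+
  have entry: "chat P \<theta> (new_row f) e
      = (if e = f then (if s f < 0 then sin_deg (\<theta> q - \<theta> p) else - sin_deg (\<theta> q - \<theta> p)) else 0)"
    if "f \<in> K" "e \<in> C \<union> K" for f e
  proof -
    have "(q, f) \<in> P" "e \<noteq> p" "e \<noteq> q" using assms(8) base(1,2)[OF that(1)] that by auto
    note entries = chat_completion_circuit[OF P(2,3) base(3)[OF that(1)] this, of \<theta>]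
    show ?thesis
    proof (cases "s f < 0")
      case True
      then show ?thesis using entries(1) by (simp add: new_row_def)
    next
      case False
      then show ?thesis using entries(2) by (simp add: new_row_def)
    qed
  qed
  have "\<forall>e\<in>K - K'. (\<Sum>a\<in>A. \<gamma> a * chat P \<theta> a e) = 0" unfolding K'_def s_def by auto
  note dep = simplex_dependency_null_columns[OF assms(3) this]
  have zero: "chat P \<theta> (new_row f) e = 0" if "f \<in> K'" "e \<in> C \<union> K" "e \<noteq> f" for f e
    using entry[of f e] that unfolding K'_def by simp
  have sign: "(\<Sum>a\<in>A. \<gamma> a * chat P \<theta> a f) * chat P \<theta> (new_row f) f < 0" if "f \<in> K'" for f
  proof -
    have "f \<in> K" "s f \<noteq> 0" using that unfolding K'_def by auto
    then show ?thesis
      using entry[of f f] base(4)[of f] unfolding s_def[symmetric] by (auto simp: mult_less_0_iff)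
  qed
  have disjoint: "new_row ` K' \<inter> A = {}"
  proof -
    have "chat P \<theta> (new_row f) e = 0" if "f \<in> K'" "e \<in> C" for f e
      using zero[OF that(1)] that assms(6) unfolding K'_def by blast
    then show ?thesis using assms(9) by fastforce
  qed
  have inj: "inj_on new_row K'"
  proof (rule inj_onI)
    fix f g assume fg: "f \<in> K'" "g \<in> K'" "new_row f = new_row g"
    have "p \<noteq> q" "f \<noteq> p" "g \<noteq> p"
      using base(1,3)[of f] base(1)[of g] fg(1,2) P(2) unfolding K'_def irrefl_def by auto
    then show "f = g" using fg(3) unfolding new_row_def by (auto simp: doubleton_eq_iff split: if_splits)
  qed
  have pivot: "\<forall>f\<in>K'. \<forall>e\<in>C \<union> (K - K') \<union> K' - {f}. chat P \<theta> (new_row f) e = 0"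
    using zero unfolding K'_def by blast
  have "K' \<inter> (C \<union> (K - K')) = {}" "finite K'"
    using assms(2,6) unfolding K'_def by auto
  then obtain \<gamma>' where "simplex_dependency (A \<union> new_row ` K') (C \<union> (K - K') \<union> K') (chat P \<theta>) \<gamma>'"
    using simplex_dependency_add_rows[OF assms(1) _ dep _ inj disjoint pivot] sign by blast
  moreover have "C \<union> (K - K') \<union> K' = C \<union> K" unfolding K'_def by blast
  moreover have "new_row ` K' \<subseteq> (\<lambda>f. ({p, f}, {q})) ` K \<union> (\<lambda>f. ({q}, {p, f})) ` K"
    unfolding new_row_def K'_def by auto
  ultimately show ?thesis by (intro exI[of _ "new_row ` K'"] conjI exI[of _ \<gamma>']) simp_all
qed

lemma simplex_matrix_dependency:
  assumes "simplex_matrix R F M"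
  shows "finite R" "\<exists>\<gamma>. simplex_dependency R F M \<gamma>"
  using assms unfolding simplex_matrix_def simplex_dependency_def by blast+

lemma card_ge_two_other:
  assumes "2 \<le> card V" "v \<in> V"
  obtains w where "w \<in> V" "w \<noteq> v"
proof -
  have "\<not> V \<subseteq> {v}"
  proof
    assume "V \<subseteq> {v}"
    then have "card V \<le> card {v}" by (intro card_mono) auto
    then show False using assms(1) by simp
  qed
  then show ?thesis using that by blast
qed

lemma minimal_insoluble_completion:
  fixes \<theta> :: "'a \<Rightarrow> real"
  assumes "finite E" "strict_po_on E P" "theta_respects E P \<theta>" "A \<subseteq> circuits_po E P"
    "a \<in> A" "a' \<in> A" "a \<noteq> a'" "F \<subseteq> E" "simplex_matrix A F (chat P \<theta>)" "total_on (E - F) P"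
  shows "\<exists>B \<subseteq> circuits_po E P. minimal_insoluble E (A \<union> B) (chat P \<theta>)"
proof -
  have P: "P \<subseteq> E \<times> E" "irrefl P" "trans P" using assms(2) by (auto simp: strict_po_on_def)
  have finA: "finite A" using simplex_matrix_dependency(1)[OF assms(9)] .
  obtain \<gamma> where base: "simplex_dependency A F (chat P \<theta>) \<gamma>"
    using simplex_matrix_dependency(2)[OF assms(9)] by blast
  obtain p q where pq: "p = q \<or> (p, q) \<in> P"
    "\<forall>f\<in>E - F - {p, q}. p \<in> E - F \<and> q \<in> E - F \<and> (p, q) \<in> P \<and> (q, f) \<in> P"
    by (rule total_on_two_least[OF finite_Diff[OF assms(1)] assms(10) P(2,3)])
  define K where "K = E - F - {p, q}"
  have finK: "finite K" and KF: "K \<inter> F = {}" using assms(1) unfolding K_def by auto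
  have chain: "K \<noteq> {} \<Longrightarrow> p \<notin> F \<union> K \<and> q \<notin> F \<union> K \<and> (p, q) \<in> P" "\<forall>f\<in>K. (q, f) \<in> P"
    using pq(2) unfolding K_def by blast+
  have nonzero: "\<forall>b\<in>A. \<exists>e\<in>F. chat P \<theta> b e \<noteq> 0"
  proof
    fix b assume "b \<in> A"
    moreover obtain b' where "b' \<in> A" "b \<noteq> b'" using assms(5-7) by blast
    ultimately show "\<exists>e\<in>F. chat P \<theta> b e \<noteq> 0" by (rule simplex_dependency_row_nonzero[OF finA base])
  qed
  obtain B \<gamma>' where B: "B \<subseteq> (\<lambda>f. ({p, f}, {q})) ` K \<union> (\<lambda>f. ({q}, {p, f})) ` K"
    and dep: "simplex_dependency (A \<union> B) (F \<union> K) (chat P \<theta>) \<gamma>'"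
    using simplex_dependency_completion[OF finA finK base assms(2,3) KF chain nonzero] by blast
  have completing: "(\<lambda>f. ({p, f}, {q})) ` K \<union> (\<lambda>f. ({q}, {p, f})) ` K \<subseteq> circuits_po E P"
  proof (intro Un_least image_subsetI)
    fix f assume "f \<in> K"
    then have "(p, q) \<in> P" "(q, f) \<in> P" using pq(2) unfolding K_def by blast+
    then show "({p, f}, {q}) \<in> circuits_po E P" "({q}, {p, f}) \<in> circuits_po E P"
      by (rule circuits_po_chainI)+
  qed
  have circ: "A \<union> B \<subseteq> circuits_po E P"
    using assms(4) subset_trans[OF B completing] by (rule Un_least)
  have finB: "finite B" using B finK by (meson finite_UnI finite_imageI finite_subset)
  have "simplex_dependency (A \<union> B) E (chat P \<theta>) \<gamma>'"
  proof (rule simplex_dependency_sinusoid_columns[OF assms(1) dep])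
    show "F \<union> K \<subseteq> E" "E - (F \<union> K) \<subseteq> {p, q}" using assms(8) unfolding K_def by auto
    show "sin_deg (\<theta> q - \<theta> p) \<noteq> 0" if "p \<noteq> q"
    proof -
      have "(p, q) \<in> P" using pq(1) that by blast
      moreover from this have "p \<in> E" "q \<in> E" using P(1) by auto
      ultimately show ?thesis using sin_deg_pos[OF assms(3)] by fastforce
    qed
    show "\<forall>i\<in>A \<union> B. \<forall>\<phi>. (\<Sum>e\<in>E. chat P \<theta> i e * sin_deg (\<theta> e + \<phi>)) = 0"
      using circuits_po_chat_orthogonal[OF assms(1,2)] circ by blast
  qed
  then have "minimal_insoluble E (A \<union> B) (chat P \<theta>)"
    using assms(5) by (intro minimal_insoluble_if_simplex_dependency[OF assms(1) finite_UnI[OF finA finB]]) auto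
  then show ?thesis using circ by blast
qed

lemma three_edge_connected_has_arc:
  assumes "three_edge_connected V Ed" "v \<in> V"
  shows "vertex_cocircuit Ed v \<noteq> ({}, {})"
proof
  assume none: "vertex_cocircuit Ed v = ({}, {})"
  have "2 \<le> card V" "connected_graph V (Ed - {})"
    using assms(1) unfolding three_edge_connected_def by auto
  obtain w where "w \<in> V" "w \<noteq> v" using card_ge_two_other[OF \<open>2 \<le> card V\<close> assms(2)] .
  then have "(v, w) \<in> ({(x, y). (x, y) \<in> Ed - {} \<or> (y, x) \<in> Ed - {}} \<inter> V \<times> V)\<^sup>*"
    using \<open>connected_graph V (Ed - {})\<close> assms(2) unfolding connected_graph_def by blast
  then have "\<exists>u. (v, u) \<in> Ed \<or> (u, v) \<in> Ed"
  proof (cases rule: converse_rtranclE)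
    case base
    then show ?thesis using \<open>w \<noteq> v\<close> by simp
  next
    case (step u)
    then show ?thesis by blast
  qed
  then obtain u where "(u, v) \<in> fst (vertex_cocircuit Ed v) \<or> (v, u) \<in> snd (vertex_cocircuit Ed v)"
    unfolding vertex_cocircuit_def by auto
  then show False using none by simp
qed

lemma twisted_graph_two_rows:
  assumes "twisted_graph V Ed P A"
  obtains a a' where "a \<in> A" "a' \<in> A" "a \<noteq> a'"
proof -
  have "\<exists>Av :: 'a \<Rightarrow> ('a \<times> 'a) sset set.
    A = (\<Union>v\<in>V. Av v) \<and> (\<forall>v\<in>V. \<forall>w\<in>V. v \<noteq> w \<longrightarrow> Av v \<inter> Av w = {}) \<and>
     (\<forall>v\<in>V. (\<forall>X\<in>Av v. \<forall>Y\<in>Av v. conformal X Y) \<and>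
        (\<exists>xs. distinct xs \<and> set xs = Av v \<and> scomp_list xs = vertex_cocircuit Ed v))"
    using assms unfolding twisted_graph_def by (elim conjE) assumption
  then obtain Av :: "'a \<Rightarrow> ('a \<times> 'a) sset set" where
    "A = (\<Union>v\<in>V. Av v) \<and> (\<forall>v\<in>V. \<forall>w\<in>V. v \<noteq> w \<longrightarrow> Av v \<inter> Av w = {}) \<and>
     (\<forall>v\<in>V. (\<forall>X\<in>Av v. \<forall>Y\<in>Av v. conformal X Y) \<and>
        (\<exists>xs. distinct xs \<and> set xs = Av v \<and> scomp_list xs = vertex_cocircuit Ed v))"
    by (erule exE)
  then have A: "A = (\<Union>v\<in>V. Av v)" and disj: "\<forall>v\<in>V. \<forall>w\<in>V. v \<noteq> w \<longrightarrow> Av v \<inter> Av w = {}"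
    and comp: "\<forall>v\<in>V. (\<forall>X\<in>Av v. \<forall>Y\<in>Av v. conformal X Y) \<and>
        (\<exists>xs. distinct xs \<and> set xs = Av v \<and> scomp_list xs = vertex_cocircuit Ed v)"
    by blast+
  have tec: "three_edge_connected V Ed" using assms by (simp add: twisted_graph_def)
  have nonempty: "Av v \<noteq> {}" if v: "v \<in> V" for v
  proof
    assume "Av v = {}"
    moreover obtain xs where "set xs = Av v" "scomp_list xs = vertex_cocircuit Ed v"
      using conjunct2[OF bspec[OF comp v]] by blast
    ultimately have "vertex_cocircuit Ed v = ({}, {})" by (simp add: scomp_list_def)
    then show False using three_edge_connected_has_arc[OF tec v] by blast
  qed
  have "2 \<le> card V" using tec unfolding three_edge_connected_def by blast
  then obtain v where v: "v \<in> V" by fastforce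
  obtain w where w: "w \<in> V" "w \<noteq> v" using card_ge_two_other[OF \<open>2 \<le> card V\<close> v] .
  obtain x y where "x \<in> Av v" "y \<in> Av w" using nonempty v w(1) by blast
  moreover have "Av v \<inter> Av w = {}" using disj v w by blast
  ultimately have "x \<noteq> y" by blast
  moreover have "x \<in> A" "y \<in> A" using A v w(1) \<open>x \<in> Av v\<close> \<open>y \<in> Av w\<close> by auto
  ultimately show ?thesis using that by blast
qed

theorem mainTheorem13:
  fixes V :: "'v set" and Ed :: "('v \<times> 'v) set" and P :: "('v \<times> 'v) rel"
    and A :: "('v \<times> 'v) sset set"
  assumes "strictly_simplicial V Ed P A"
  shows "\<forall>\<theta>. theta_respects Ed P \<theta> \<longrightarrow>
           (\<exists>B. B \<subseteq> circuits_po Ed P \<and>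
                minimal_insoluble Ed (A \<union> B) (\<lambda>c e. chat P \<theta> c e))"
proof (intro allI impI)
  fix \<theta> assume \<theta>: "theta_respects Ed P \<theta>"
  obtain F where F: "F \<subseteq> Ed" "simplicial_on Ed P A F" "total_on (Ed - F) P"
    and tw: "twisted_graph V Ed P A"
    using assms unfolding strictly_simplicial_def by blast
  obtain a a' where a: "a \<in> A" "a' \<in> A" "a \<noteq> a'" using twisted_graph_two_rows[OF tw] .
  have "digraph V Ed" using tw by (simp add: twisted_graph_def)
  then have "finite Ed" unfolding digraph_def by (meson finite_SigmaI finite_subset)
  moreover have "strict_po_on Ed P" "A \<subseteq> circuits_po Ed P" using tw by (simp_all add: twisted_graph_def)
  moreover have "simplex_matrix A F (chat P \<theta>)" using F(2) \<theta> unfolding simplicial_on_def by blast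
  ultimately show "\<exists>B. B \<subseteq> circuits_po Ed P \<and> minimal_insoluble Ed (A \<union> B) (\<lambda>c e. chat P \<theta> c e)"
    using minimal_insoluble_completion[OF _ _ \<theta> _ a F(1) _ F(3)] by blast
qed

end
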